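(* Let $q\in X^*\setminus\{e\}$ and $\xi\in X^\omega$. The following are equivalent: (i) $\xi$ is quasiperiodic with quasiperiod $q$; (ii) the set $\mathrm{pref}(\xi)\cap Q_q$ is infinite; (iii) $\mathrm{pref}(\xi)\subseteq\mathrm{pref}(Q_q)$.
   Context: $X$ is a finite alphabet with $|X|\ge 2$; $X^*$ the finite words (empty word $e$), $X^\omega$ the infinite words; $|w|$ is length; $w\sqsubseteq\eta$ means $w$ is a prefix of $\eta$. For $B\subseteq X^*\cup X^\omega$ (or a single word), $\mathrm{pref}(B)$ is the set of all finite prefixes of elements of $B$. A word $\eta\in X^*\cup X^\omega$ is quasiperiodic with quasiperiod $q\in X^*\setminus\{e\}$ if for every natural number $j<|\eta|$ there is a prefix $u_j\sqsubseteq\eta$ with $j-|q|<|u_j|\le j$ and $u_j\cdot q\sqsubseteq\eta$. $Q_q$ is the set of finite words quasiperiodic with quasiperiod $q$ (including $e$). *)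

theory Defs
  imports Main "HOL-Library.Sublist"
begin

definition iprefix :: "'a list \<Rightarrow> (nat \<Rightarrow> 'a) \<Rightarrow> bool" where
  "iprefix w \<xi> \<longleftrightarrow> (\<forall>i < length w. w ! i = \<xi> i)"

definition ipref :: "(nat \<Rightarrow> 'a) \<Rightarrow> 'a list set" where
  "ipref \<xi> = {w. iprefix w \<xi>}"

definition pref :: "'a list set \<Rightarrow> 'a list set" where
  "pref B = {w. \<exists>v\<in>B. prefix w v}"

text \<open>Quasiperiodicity; the condition j - |q| < |u| is written as j < |u| + |q|
  to avoid truncated subtraction.\<close>

definition quasiperiodic_fin :: "'a list \<Rightarrow> 'a list \<Rightarrow> bool" where
  "quasiperiodic_fin q \<eta> \<longleftrightarrow>
     (\<forall>j < length \<eta>. \<exists>u. prefix u \<eta> \<and> j < length u + length q \<and> length u \<le> j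
                         \<and> prefix (u @ q) \<eta>)"

definition quasiperiodic_inf :: "'a list \<Rightarrow> (nat \<Rightarrow> 'a) \<Rightarrow> bool" where
  "quasiperiodic_inf q \<xi> \<longleftrightarrow>
     (\<forall>j. \<exists>u. iprefix u \<xi> \<and> j < length u + length q \<and> length u \<le> j
              \<and> iprefix (u @ q) \<xi>)"

definition Q :: "'a set \<Rightarrow> 'a list \<Rightarrow> 'a list set" where
  "Q X q = {w \<in> lists X. quasiperiodic_fin q w}"

end

theory Submission
  imports Defs "HOL-Library.Infinite_Set"
begin

(* The finite prefixes of an infinite word xi are exactly the words
   itake xi n (its first n letters), one for each length n.  We prove the cycle
   of implications (i) ==> (ii) ==> (iii) ==> (i):
   (i) ==> (ii): if xi is quasiperiodic, every prefix of xi that ends with an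
     occurrence u @ q of q is itself quasiperiodic (positions before u are
     covered as in xi, positions from |u| on are covered by this last
     occurrence); such prefixes have unbounded length.
   (ii) ==> (iii): holds for any language A in place of Q_q: infinitely many
     prefixes of xi in A have unbounded length, so every prefix of xi extends
     to one of them.
   (iii) ==> (i): to cover position j, take an element of Q_q extending the
     prefix of length j + |q|; the occurrence covering j in it ends at most at
     j + |q|, hence lies inside that prefix and thus inside xi. *)

definition itake :: "(nat \<Rightarrow> 'a) \<Rightarrow> nat \<Rightarrow> 'a list" where
  "itake \<xi> n = map \<xi> [0..<n]"

lemma length_itake [simp]: "length (itake \<xi> n) = n"
  by (simp add: itake_def)

lemma iprefix_iff_itake: "iprefix w \<xi> \<longleftrightarrow> w = itake \<xi> (length w)"
proof
  assume "iprefix w \<xi>"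
  then show "w = itake \<xi> (length w)" by (intro nth_equalityI) (simp_all add: iprefix_def itake_def)
next
  assume "w = itake \<xi> (length w)"
  moreover have "iprefix (itake \<xi> n) \<xi>" for n by (simp add: iprefix_def itake_def)
  ultimately show "iprefix w \<xi>" by metis
qed

lemma ipref_eq_range_itake: "ipref \<xi> = range (itake \<xi>)"
  unfolding ipref_def by (auto simp: iprefix_iff_itake)

lemma inj_itake: "inj (itake \<xi>)"
  by (rule injI) (metis length_itake)

lemma itake_in_lists: "range \<xi> \<subseteq> X \<Longrightarrow> itake \<xi> n \<in> lists X"
  by (auto simp: itake_def image_subset_iff)

lemma iprefix_appendD: "iprefix (u @ v) \<xi> \<Longrightarrow> iprefix u \<xi>"
proof -
  assume uv: "iprefix (u @ v) \<xi>"
  have "u ! i = \<xi> i" if "i < length u" for i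
    using uv that by (auto simp: iprefix_def nth_append dest: spec[of _ i])
  then show "iprefix u \<xi>" by (simp add: iprefix_def)
qed

lemma prefix_itake_iff: "prefix u (itake \<xi> n) \<longleftrightarrow> length u \<le> n \<and> iprefix u \<xi>"
proof
  assume "prefix u (itake \<xi> n)"
  then obtain z where z: "itake \<xi> n = u @ z" by (auto simp: prefix_def)
  then have "length u \<le> n" by (metis le_add1 length_append length_itake)
  moreover have "u ! i = \<xi> i" if "i < length u" for i
  proof -
    have "u ! i = itake \<xi> n ! i" using z that by (simp add: nth_append)
    also have "\<dots> = \<xi> i" using that \<open>length u \<le> n\<close> by (simp add: itake_def)
    finally show ?thesis .
  qed
  ultimately show "length u \<le> n \<and> iprefix u \<xi>" by (simp add: iprefix_def)
next
  assume "length u \<le> n \<and> iprefix u \<xi>"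
  then have "length u \<le> n" and u: "u = itake \<xi> (length u)" by (simp_all add: iprefix_iff_itake)
  then obtain m where "n = length u + m" using le_Suc_ex by blast
  then have "itake \<xi> n = itake \<xi> (length u) @ map \<xi> [length u..<length u + m]"
    unfolding itake_def by (simp only: upt_add_eq_append[OF le0] map_append)
  then show "prefix u (itake \<xi> n)" using u by (metis prefixI)
qed

lemma quasiperiodic_prefix_up_to_occurrence:
  assumes qp: "quasiperiodic_inf q \<xi>" and occ: "iprefix (u @ q) \<xi>"
  shows "quasiperiodic_fin q (itake \<xi> (length u + length q))"
  unfolding quasiperiodic_fin_def
proof (intro allI impI)
  fix j
  assume j: "j < length (itake \<xi> (length u + length q))"
  show "\<exists>v. prefix v (itake \<xi> (length u + length q)) \<and> j < length v + length q
            \<and> length v \<le> j \<and> prefix (v @ q) (itake \<xi> (length u + length q))"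
  proof (cases "length u \<le> j")
    case True
    with j occ iprefix_appendD[OF occ] show ?thesis
      by (intro exI[of _ u]) (auto simp: prefix_itake_iff)
  next
    case False
    text \<open>Position \<open>j\<close> is covered in \<open>\<xi>\<close> by an occurrence starting before \<open>j < |u|\<close>.\<close>
    from qp obtain v where "iprefix v \<xi>" "j < length v + length q" "length v \<le> j"
        "iprefix (v @ q) \<xi>"
      unfolding quasiperiodic_inf_def by blast
    with False show ?thesis
      by (intro exI[of _ v]) (auto simp: prefix_itake_iff)
  qed
qed

lemma quasiperiodic_imp_infinite_prefixes:
  assumes qp: "quasiperiodic_inf q \<xi>" and X: "range \<xi> \<subseteq> X"
  shows "infinite (ipref \<xi> \<inter> Q X q)"
proof -
  define M where "M = {length u + length q | u. iprefix (u @ q) \<xi>}"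
  have "itake \<xi> ` M \<subseteq> ipref \<xi> \<inter> Q X q"
    using quasiperiodic_prefix_up_to_occurrence[OF qp] itake_in_lists[OF X]
    by (auto simp: M_def ipref_eq_range_itake Q_def)
  moreover have "infinite M"
    unfolding infinite_nat_iff_unbounded_le
  proof
    fix n
    from qp obtain u where "n < length u + length q" "iprefix (u @ q) \<xi>"
      unfolding quasiperiodic_inf_def by blast
    then show "\<exists>m\<ge>n. m \<in> M" unfolding M_def by (intro exI[of _ "length u + length q"]) auto
  qed
  then have "infinite (itake \<xi> ` M)"
    using finite_imageD inj_on_subset[OF inj_itake subset_UNIV] by blast
  ultimately show ?thesis using finite_subset by blast
qed

lemma infinite_prefixes_imp_pref_subset:
  assumes inf: "infinite (ipref \<xi> \<inter> A)"
  shows "ipref \<xi> \<subseteq> pref A"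
proof
  fix w
  assume "w \<in> ipref \<xi>"
  then have w: "iprefix w \<xi>" by (simp add: ipref_def)
  have "\<not> ipref \<xi> \<inter> A \<subseteq> itake \<xi> ` {..<length w}"
    using inf finite_subset by blast
  then obtain m where "itake \<xi> m \<in> A" "m \<notin> {..<length w}"
    unfolding ipref_eq_range_itake by blast
  then have "itake \<xi> m \<in> A" "length w \<le> m" by simp_all
  moreover have "prefix w (itake \<xi> m)" using w \<open>length w \<le> m\<close> by (simp add: prefix_itake_iff)
  ultimately show "w \<in> pref A" by (auto simp: pref_def)
qed

text \<open>(iii) \<open>\<Longrightarrow>\<close> (i): the occurrence covering \<open>j\<close> in an element of \<open>Q\<^sub>q\<close> extending
  the prefix of length \<open>j + |q|\<close> ends inside that prefix.\<close>

lemma pref_subset_imp_quasiperiodic: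
  assumes sub: "ipref \<xi> \<subseteq> pref (Q X q)" and q: "q \<noteq> []"
  shows "quasiperiodic_inf q \<xi>"
  unfolding quasiperiodic_inf_def
proof
  fix j
  let ?w = "itake \<xi> (j + length q)"
  have "?w \<in> pref (Q X q)" using sub by (auto simp: ipref_eq_range_itake)
  then obtain v where v: "quasiperiodic_fin q v" "prefix ?w v"
    by (auto simp: pref_def Q_def)
  have "j + length q \<le> length v" using prefix_length_le[OF v(2)] by simp
  with q have "j < length v" by (cases q) simp_all
  then obtain u where u: "j < length u + length q" "length u \<le> j" "prefix (u @ q) v"
    using v(1) unfolding quasiperiodic_fin_def by blast
  have "prefix (u @ q) ?w"
    using prefix_length_prefix[OF u(3) v(2)] u(2) by simp
  then have uq: "iprefix (u @ q) \<xi>" by (simp add: prefix_itake_iff)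
  show "\<exists>u. iprefix u \<xi> \<and> j < length u + length q \<and> length u \<le> j \<and> iprefix (u @ q) \<xi>"
    using iprefix_appendD[OF uq] uq u(1,2) by blast
qed

theorem corollary2:
  fixes X :: "'a set" and q :: "'a list" and \<xi> :: "nat \<Rightarrow> 'a"
  assumes "finite X" and "card X \<ge> 2"
    and "q \<in> lists X" and "q \<noteq> []"
    and "range \<xi> \<subseteq> X"
  shows "(quasiperiodic_inf q \<xi> \<longleftrightarrow> infinite (ipref \<xi> \<inter> Q X q))
       \<and> (infinite (ipref \<xi> \<inter> Q X q) \<longleftrightarrow> ipref \<xi> \<subseteq> pref (Q X q))"
proof -
  have i_ii: "quasiperiodic_inf q \<xi> \<Longrightarrow> infinite (ipref \<xi> \<inter> Q X q)"
    using quasiperiodic_imp_infinite_prefixes \<open>range \<xi> \<subseteq> X\<close> by blast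
  have ii_iii: "infinite (ipref \<xi> \<inter> Q X q) \<Longrightarrow> ipref \<xi> \<subseteq> pref (Q X q)"
    by (rule infinite_prefixes_imp_pref_subset)
  have iii_i: "ipref \<xi> \<subseteq> pref (Q X q) \<Longrightarrow> quasiperiodic_inf q \<xi>"
    using pref_subset_imp_quasiperiodic \<open>q \<noteq> []\<close> by blast
  show ?thesis using i_ii ii_iii iii_i by blast
qed

end
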